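(* For $n\geq 1$ and $m\geq 2$, the flip graph $\mathcal{T}(T(2n+1,2m))$ of domino tilings of the quadriculated torus $T(2n+1,2m)$ has exactly two components, and these two components are isomorphic.
   Context: The quadriculated torus $T(a,b)$ is obtained from an $a\times b$ chessboard ($a$ rows each of $b$ unit squares) by identifying left and right sides and top and bottom sides. A domino is the union of two adjacent unit squares; a tiling is a collection of dominoes with disjoint interiors covering the surface. A flip replaces two parallel dominoes forming a $2\times 2$ block by the other two dominoes covering that block. The flip graph has the tilings as vertices, two tilings being adjacent iff they differ by a single flip. *)

theory Defs
  imports Main
begin

text \<open>Quadriculated torus T(a,b): a rows, b columns; cell (i,j) with i < a (row), j < b (column),
  indices taken modulo a resp. b.\<close>

type_synonym cell = "nat \<times> nat"

definition cells :: "nat \<Rightarrow> nat \<Rightarrow> cell set" where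
  "cells a b = {(i, j). i < a \<and> j < b}"

definition down :: "nat \<Rightarrow> cell \<Rightarrow> cell" where
  "down a c = ((fst c + 1) mod a, snd c)"

definition right :: "nat \<Rightarrow> cell \<Rightarrow> cell" where
  "right b c = (fst c, (snd c + 1) mod b)"

definition is_domino :: "nat \<Rightarrow> nat \<Rightarrow> cell set \<Rightarrow> bool" where
  "is_domino a b D \<longleftrightarrow> (\<exists>c \<in> cells a b. D = {c, down a c} \<or> D = {c, right b c})"

definition is_tiling :: "nat \<Rightarrow> nat \<Rightarrow> cell set set \<Rightarrow> bool" where
  "is_tiling a b T \<longleftrightarrow>
     (\<forall>D \<in> T. is_domino a b D) \<and>
     (\<forall>D \<in> T. \<forall>D' \<in> T. D \<noteq> D' \<longrightarrow> D \<inter> D' = {}) \<and>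
     \<Union>T = cells a b"

definition tilings :: "nat \<Rightarrow> nat \<Rightarrow> cell set set set" where
  "tilings a b = {T. is_tiling a b T}"

definition hpair :: "nat \<Rightarrow> nat \<Rightarrow> cell \<Rightarrow> cell set set" where
  "hpair a b c = {{c, right b c}, {down a c, right b (down a c)}}"

definition vpair :: "nat \<Rightarrow> nat \<Rightarrow> cell \<Rightarrow> cell set set" where
  "vpair a b c = {{c, down a c}, {right b c, down a (right b c)}}"

definition flip :: "nat \<Rightarrow> nat \<Rightarrow> cell set set \<Rightarrow> cell set set \<Rightarrow> bool" where
  "flip a b T T' \<longleftrightarrow> (\<exists>c \<in> cells a b.
      (hpair a b c \<subseteq> T \<and> T' = (T - hpair a b c) \<union> vpair a b c) \<or>
      (vpair a b c \<subseteq> T \<and> T' = (T - vpair a b c) \<union> hpair a b c))"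

definition flip_connected :: "nat \<Rightarrow> nat \<Rightarrow> (cell set set \<times> cell set set) set" where
  "flip_connected a b = {(T, T'). T \<in> tilings a b \<and> T' \<in> tilings a b \<and>
      (\<lambda>x y. x \<in> tilings a b \<and> y \<in> tilings a b \<and> flip a b x y)\<^sup>*\<^sup>* T T'}"

definition flip_components :: "nat \<Rightarrow> nat \<Rightarrow> cell set set set set" where
  "flip_components a b = tilings a b // flip_connected a b"

definition flip_iso :: "nat \<Rightarrow> nat \<Rightarrow> cell set set set \<Rightarrow> cell set set set \<Rightarrow> bool" where
  "flip_iso a b C1 C2 \<longleftrightarrow> (\<exists>f. bij_betw f C1 C2 \<and>
      (\<forall>x \<in> C1. \<forall>y \<in> C1. flip a b x y \<longleftrightarrow> flip a b (f x) (f y)))"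

end

theory Submission
  imports Defs
begin

text \<open>Colour the cells like a chessboard. Comparing two tilings s and t edge by edge gives a
  closed integer 1-form on the lattice points; its potential f (a quarter of the difference of the
  Thurston heights of t and s) is periodic horizontally and, since the number of rows is odd,
  can be chosen antiperiodic vertically exactly when a certain sum is even. Call s and t height
  related when such an f exists. A flip changes f at a single point, so flip-connected tilings
  are height related. Conversely, if t is height related to a brick tiling s (all dominoes
  horizontal), then at a maximum of the Thurston height of t there is a flippable block, and
  flipping it decreases the sum of the absolute values of f over a fundamental domain; by descent
  t is flip-connected to s. The two brick tilings, staggered by one column, are not height
  related, while every tiling is height related to one of them: so there are exactly two
  components, and the shift by one column maps one onto the other.\<close>

lemma is_tiling_replace:
  assumes T: "is_tiling a b T" and PT: "P \<subseteq> T" and U: "\<Union>P = \<Union>Q"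
    and Qd: "\<And>X. X \<in> Q \<Longrightarrow> is_domino a b X"
    and Qdisj: "\<And>X Y. X \<in> Q \<Longrightarrow> Y \<in> Q \<Longrightarrow> X \<noteq> Y \<Longrightarrow> X \<inter> Y = {}"
  shows "is_tiling a b (T - P \<union> Q)"
proof -
  have Td: "\<And>X. X \<in> T \<Longrightarrow> is_domino a b X"
    and Tdisj: "\<And>X Y. X \<in> T \<Longrightarrow> Y \<in> T \<Longrightarrow> X \<noteq> Y \<Longrightarrow> X \<inter> Y = {}"
    using T unfolding is_tiling_def by simp_all
  have mixed: "X \<inter> Y = {}" if "X \<in> T - P" "Y \<in> Q" for X Y
  proof -
    have "X \<inter> Z = {}" if "Z \<in> P" for Z
      using Tdisj[of X Z] that PT \<open>X \<in> T - P\<close> by blast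
    then have "X \<inter> \<Union>P = {}" by blast
    then show ?thesis using U that(2) by blast
  qed
  have "D \<inter> D' = {}" if "D \<in> T - P \<union> Q" "D' \<in> T - P \<union> Q" "D \<noteq> D'" for D D'
  proof (cases "D \<in> Q")
    case True
    then show ?thesis using that Qdisj mixed[of D' D] by blast
  next
    case False
    then show ?thesis using that Tdisj mixed[of D D'] by blast
  qed
  moreover have "\<Union>(T - P \<union> Q) = \<Union>T" using PT U by blast
  moreover have "X \<in> T - P \<union> Q \<Longrightarrow> is_domino a b X" for X using Td Qd by blast
  ultimately show ?thesis using T unfolding is_tiling_def by simp
qed

lemma is_tiling_domino: "is_tiling a b T \<Longrightarrow> X \<in> T \<Longrightarrow> is_domino a b X"
  unfolding is_tiling_def by simp

lemma is_tiling_overlap_notin: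
  assumes "is_tiling a b T" "X \<in> T" "c \<in> X" "c \<in> Y" "Y \<noteq> X"
  shows "Y \<notin> T"
  using assms unfolding is_tiling_def by blast

lemma is_tiling_ex1:
  assumes "is_tiling a b T" "c \<in> cells a b"
  shows "\<exists>!X. X \<in> T \<and> c \<in> X"
proof -
  have "c \<in> \<Union>T" using assms unfolding is_tiling_def by simp
  then obtain X where "X \<in> T" "c \<in> X" by blast
  moreover have "Y = X" if "Y \<in> T" "c \<in> Y" for Y
    using assms(1) that \<open>X \<in> T\<close> \<open>c \<in> X\<close> unfolding is_tiling_def by blast
  ultimately show ?thesis by blast
qed

definition tiling_image :: "(cell \<Rightarrow> cell) \<Rightarrow> cell set set \<Rightarrow> cell set set" where
  "tiling_image g T = (\<lambda>D. g ` D) ` T"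

definition chess_sign :: "int \<Rightarrow> int \<Rightarrow> int" where
  "chess_sign i j = (if even (i + j) then 1 else -1)"

lemma chess_sign_add1_left: "chess_sign (i + 1) j = - chess_sign i j"
  and chess_sign_add1_right: "chess_sign i (j + 1) = - chess_sign i j"
  and chess_sign_diff1_left: "chess_sign (i - 1) j = - chess_sign i j"
  and chess_sign_diff1_right: "chess_sign i (j - 1) = - chess_sign i j"
  and chess_sign_split: "chess_sign i j = chess_sign i 0 * chess_sign 0 j"
  unfolding chess_sign_def by auto

lemma chess_sign_cases: "chess_sign i j = 1 \<or> chess_sign i j = -1"
  unfolding chess_sign_def by auto

lemma sum_chess_sign_lessThan:
  "(\<Sum>k<n. chess_sign (int k) 0) = (if even n then 0 else 1)"
  "(\<Sum>k<n. chess_sign 0 (int k)) = (if even n then 0 else 1)"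
  by (induction n) (auto simp: chess_sign_def)

lemma sum_lessThan_shift_periodic:
  fixes g :: "int \<Rightarrow> 'a::ab_group_add"
  assumes "g (int n) = g 0"
  shows "(\<Sum>k<n. g (int k + 1)) = (\<Sum>k<n. g (int k))"
proof -
  have "(\<Sum>k<Suc n. g (int k)) = g 0 + (\<Sum>k<n. g (int k + 1))"
    using sum.lessThan_Suc_shift[of "\<lambda>k. g (int k)" n] by (simp add: add.commute)
  also have "(\<Sum>k<Suc n. g (int k)) = (\<Sum>k<n. g (int k)) + g 0"
    using assms by simp
  finally show ?thesis by (simp add: add.commute)
qed

lemma int_const_if_step_invariant:
  fixes h :: "int \<Rightarrow> 'a"
  assumes "\<And>x. h (x + 1) = h x"
  shows "h x = h 0"
proof (induction x rule: int_induct[where k = 0])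
  case (step2 i)
  then show ?case using assms[of "i - 1"] by simp
qed (use assms in simp_all)

lemma int2_const_if_step_invariant:
  fixes D :: "int \<Rightarrow> int \<Rightarrow> 'a"
  assumes "\<And>i j. D (i + 1) j = D i j" and "\<And>i j. D i (j + 1) = D i j"
  shows "D i j = D 0 0"
  using int_const_if_step_invariant[of "\<lambda>x. D x j" i] int_const_if_step_invariant[of "D 0" j] assms
  by simp

lemma sum_steps:
  fixes S :: "int \<Rightarrow> 'a::ab_group_add"
  assumes "\<And>x. S (x + 1) - S x = d x"
  shows "S (int n) - S 0 = (\<Sum>k<n. d (int k))"
proof (induction n)
  case (Suc n)
  then show ?case using assms[of "int n"] by (simp add: algebra_simps)
qed simp

lemma int_antiderivative:
  fixes d :: "int \<Rightarrow> 'a::ab_group_add"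
  shows "\<exists>S. S 0 = 0 \<and> (\<forall>x. S (x + 1) - S x = d x)"
proof -
  define S where "S x = sum d {0..<x} - sum d {x..<0}" for x
  have "S (x + 1) - S x = d x" for x
  proof (cases "0 \<le> x")
    case True
    then have "{0..<x + 1} = insert x {0..<x}" "{x + 1..<0} = {}" "{x..<0} = {}" by auto
    then show ?thesis unfolding S_def by simp
  next
    case False
    then have "{0..<x + 1} = {}" "{0..<x} = {}" "{x..<0} = insert x {x + 1..<0}" by auto
    then show ?thesis unfolding S_def by simp
  qed
  moreover have "S 0 = 0" unfolding S_def by simp
  ultimately show ?thesis by blast
qed

lemma discrete_poincare:
  fixes a b :: "int \<Rightarrow> int \<Rightarrow> 'a::ab_group_add"
  assumes closed: "\<And>i j. a i (j + 1) - a i j = b (i + 1) j - b i j"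
  shows "\<exists>F. \<forall>i j. F (i + 1) j - F i j = a i j \<and> F i (j + 1) - F i j = b i j"
proof -
  obtain A where A: "A 0 = 0" "\<And>x. A (x + 1) - A x = a x 0"
    using int_antiderivative[of "\<lambda>x. a x 0"] by blast
  obtain B where B: "\<And>i. B i 0 = 0" "\<And>i y. B i (y + 1) - B i y = b i y"
    using int_antiderivative[of "b _"] by metis
  define F where "F i j = A i + B i j" for i j
  have "F (i + 1) j - F i j = a i j" for i j
  proof -
    define D where "D y = F (i + 1) y - F i y - a i y" for y
    have "D (y + 1) = D y" for y
      using B(2)[of "i + 1" y] B(2)[of i y] closed[of i y] unfolding D_def F_def
      by (simp add: algebra_simps)
    then have "D j = D 0" by (rule int_const_if_step_invariant)
    also have "D 0 = 0" unfolding D_def F_def using A(2)[of i] B(1) by simp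
    finally show ?thesis unfolding D_def by simp
  qed
  moreover have "F i (j + 1) - F i j = b i j" for i j unfolding F_def using B(2) by simp
  ultimately show ?thesis by blast
qed

lemma periodic_mod_eq:
  fixes g :: "int \<Rightarrow> 'a"
  assumes per: "\<And>x. g (x + p) = g x"
  shows "g (x mod p) = g x"
proof -
  have "g (y + p * k) = g y" for y k
  proof (induction k rule: int_induct[where k = 0])
    case (step1 i)
    then show ?case using per[of "y + p * i"] by (simp add: algebra_simps)
  next
    case (step2 i)
    then show ?case using per[of "y + p * (i - 1)"] by (simp add: algebra_simps)
  qed simp
  from this[of "x mod p" "x div p"] show ?thesis by simp
qed

lemma periodic2_has_max:
  fixes g :: "int \<Rightarrow> int \<Rightarrow> 'a::linorder"
  assumes "0 < P" "0 < Q" "\<And>i j. g (i + P) j = g i j" "\<And>i j. g i (j + Q) = g i j"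
  obtains i0 j0 where "\<And>i j. g i j \<le> g i0 j0"
proof -
  define B where "B = {0..<P} \<times> {0..<Q}"
  have B: "finite B" "B \<noteq> {}" unfolding B_def using assms(1,2) by auto
  define M where "M = Max ((\<lambda>w. g (fst w) (snd w)) ` B)"
  have "M \<in> (\<lambda>w. g (fst w) (snd w)) ` B" unfolding M_def using B by simp
  then obtain v where v: "v \<in> B" "g (fst v) (snd v) = M" by blast
  have le_M: "g (fst w) (snd w) \<le> M" if "w \<in> B" for w unfolding M_def using B that by simp
  have "g i j = g (i mod P) (j mod Q)" for i j
    using periodic_mod_eq[of "\<lambda>x. g x j" P i] periodic_mod_eq[of "g (i mod P)" Q j] assms(3,4)
    by simp
  moreover have "(i mod P, j mod Q) \<in> B" for i j unfolding B_def using assms(1,2) by simp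
  ultimately show ?thesis using that[of "fst v" "snd v"] le_M v(2) by fastforce
qed

lemma antiperiodic_max_pos:
  fixes f h :: "int \<Rightarrow> int \<Rightarrow> int"
  assumes anti: "\<And>i j. f (i + n) j = - f i j"
    and range: "\<And>i j. lo \<le> h i j \<and> h i j \<le> lo + 3"
    and max: "\<And>i j. h i j + 4 * f i j \<le> h i0 j0 + 4 * f i0 j0"
    and nonzero: "f a b \<noteq> 0"
  shows "1 \<le> f i0 j0"
proof (rule ccontr)
  assume "\<not> 1 \<le> f i0 j0"
  then have nonpos: "f i j \<le> 0" for i j
    using max[of i j] range[of i j] range[of i0 j0] by linarith
  show False using nonpos[of a b] nonpos[of "a + n" b] anti[of a b] nonzero by linarith
qed

section \<open>Dominoes on the torus\<close>

text \<open>With at least three rows and columns, cells at distance one or two are distinct, so a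
  domino determines its position and orientation.\<close>

locale torus_grid =
  fixes N L :: nat
  assumes N_ge3: "3 \<le> N" and L_ge3: "3 \<le> L"
begin

definition cell_at :: "int \<Rightarrow> int \<Rightarrow> cell" where
  "cell_at i j = (nat (i mod int N), nat (j mod int L))"

lemma cell_at_eq_iff: "cell_at a b = cell_at c d \<longleftrightarrow> int N dvd (a - c) \<and> int L dvd (b - d)"
proof -
  have "int N > 0" "int L > 0" using N_ge3 L_ge3 by auto
  then show ?thesis unfolding cell_at_def by (simp add: nat_eq_iff mod_eq_dvd_iff)
qed

lemma cell_at_eq_near:
  assumes "\<bar>a - c\<bar> \<le> 2" "\<bar>b - d\<bar> \<le> 2"
  shows "cell_at a b = cell_at c d \<longleftrightarrow> a = c \<and> b = d"
proof -
  have small: "x = 0" if "int M dvd x" "\<bar>x\<bar> \<le> 2" "3 \<le> M" for x M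
  proof (rule ccontr)
    assume "x \<noteq> 0"
    then have "\<bar>int M\<bar> \<le> \<bar>x\<bar>" using dvd_imp_le_int that(1) by blast
    then show False using that(2,3) by linarith
  qed
  have "int N dvd (a - c) \<longleftrightarrow> a = c" using small[of N "a - c"] assms(1) N_ge3 by auto
  moreover have "int L dvd (b - d) \<longleftrightarrow> b = d" using small[of L "b - d"] assms(2) L_ge3 by auto
  ultimately show ?thesis unfolding cell_at_eq_iff by simp
qed

lemma cell_at_shift: "cell_at a b = cell_at c d \<Longrightarrow> cell_at (a + k) (b + l) = cell_at (c + k) (d + l)"
  by (simp add: cell_at_eq_iff)

lemma cell_at_add_N [simp]: "cell_at (i + int N) j = cell_at i j"
  and cell_at_add_L [simp]: "cell_at i (j + int L) = cell_at i j"
  by (simp_all add: cell_at_eq_iff)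

lemma cell_at_in_cells: "cell_at i j \<in> cells N L"
  using N_ge3 L_ge3 unfolding cell_at_def cells_def by (auto simp: nat_less_iff)

lemma cells_eq_cell_at: "x \<in> cells N L \<Longrightarrow> x = cell_at (int (fst x)) (int (snd x))"
  unfolding cell_at_def cells_def by (auto simp: zmod_int[symmetric])

lemma down_cell_at: "down N (cell_at i j) = cell_at (i + 1) j"
  and right_cell_at: "right L (cell_at i j) = cell_at i (j + 1)"
proof -
  have step: "(nat (x mod int M) + 1) mod M = nat ((x + 1) mod int M)" if "0 < M" for x M
  proof -
    have "int ((nat (x mod int M) + 1) mod M) = (x + 1) mod int M"
      using that by (simp add: zmod_int) (metis add.commute mod_add_left_eq)
    then show ?thesis by (metis nat_int)
  qed
  show "down N (cell_at i j) = cell_at (i + 1) j" "right L (cell_at i j) = cell_at i (j + 1)"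
    unfolding down_def right_def cell_at_def using step N_ge3 L_ge3 by simp_all
qed

definition vdomino :: "int \<Rightarrow> int \<Rightarrow> cell set" where
  "vdomino i j = {cell_at i j, cell_at (i + 1) j}"

definition hdomino :: "int \<Rightarrow> int \<Rightarrow> cell set" where
  "hdomino i j = {cell_at i j, cell_at i (j + 1)}"

lemma vdomino_add_N [simp]: "vdomino (i + int N) j = vdomino i j"
  and vdomino_add_L [simp]: "vdomino i (j + int L) = vdomino i j"
  and hdomino_add_N [simp]: "hdomino (i + int N) j = hdomino i j"
  and hdomino_add_L [simp]: "hdomino i (j + int L) = hdomino i j"
  unfolding vdomino_def hdomino_def using cell_at_add_N[of "i + 1"] cell_at_add_L[of _ "j + 1"]
  by (simp_all add: ac_simps)

lemma is_domino_vdomino: "is_domino N L (vdomino i j)"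
  and is_domino_hdomino: "is_domino N L (hdomino i j)"
  unfolding is_domino_def vdomino_def hdomino_def
  by (intro bexI[of _ "cell_at i j"]; simp add: down_cell_at right_cell_at cell_at_in_cells)+

lemma is_domino_cases:
  assumes "is_domino N L X"
  obtains i j where "X = vdomino i j" | i j where "X = hdomino i j"
proof -
  obtain x where x: "x \<in> cells N L" "X = {x, down N x} \<or> X = {x, right L x}"
    using assms unfolding is_domino_def by blast
  define i j where "i = int (fst x)" and "j = int (snd x)"
  have "x = cell_at i j" unfolding i_def j_def by (rule cells_eq_cell_at[OF x(1)])
  with x(2) show ?thesis
    using that unfolding vdomino_def hdomino_def by (auto simp: down_cell_at right_cell_at)
qed

lemma vdomino_neq_hdomino: "vdomino i j \<noteq> hdomino k l"
proof
  assume "vdomino i j = hdomino k l"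
  then have "int N dvd (i - k) \<and> int N dvd (i + 1 - k)"
    unfolding vdomino_def hdomino_def by (auto simp: doubleton_eq_iff cell_at_eq_iff)
  then have "int N dvd (i + 1 - k) - (i - k)" by (blast intro: dvd_diff)
  then have "int N dvd 1" by simp
  then show False using N_ge3 by simp
qed

lemma vdomino_eq_iff: "vdomino i j = vdomino k l \<longleftrightarrow> cell_at i j = cell_at k l"
proof
  assume "vdomino i j = vdomino k l"
  moreover have "cell_at i j \<noteq> cell_at (k + 1) l \<or> cell_at (i + 1) j \<noteq> cell_at k l"
  proof (rule ccontr)
    assume "\<not> ?thesis"
    then have "int N dvd (i - (k + 1)) \<and> int N dvd (i + 1 - k)" by (simp add: cell_at_eq_iff)
    then have "int N dvd (i + 1 - k) - (i - (k + 1))" by (blast intro: dvd_diff)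
    then have "int N dvd 2" by simp
    then show False using N_ge3 by (simp add: zdvd_not_zless)
  qed
  ultimately show "cell_at i j = cell_at k l" unfolding vdomino_def by (auto simp: doubleton_eq_iff)
qed (use cell_at_shift[of i j k l 1 0] in \<open>simp add: vdomino_def\<close>)

lemma hdomino_eq_iff: "hdomino i j = hdomino k l \<longleftrightarrow> cell_at i j = cell_at k l"
proof
  assume "hdomino i j = hdomino k l"
  moreover have "cell_at i j \<noteq> cell_at k (l + 1) \<or> cell_at i (j + 1) \<noteq> cell_at k l"
  proof (rule ccontr)
    assume "\<not> ?thesis"
    then have "int L dvd (j - (l + 1)) \<and> int L dvd (j + 1 - l)" by (simp add: cell_at_eq_iff)
    then have "int L dvd (j + 1 - l) - (j - (l + 1))" by (blast intro: dvd_diff)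
    then have "int L dvd 2" by simp
    then show False using L_ge3 by (simp add: zdvd_not_zless)
  qed
  ultimately show "cell_at i j = cell_at k l" unfolding hdomino_def by (auto simp: doubleton_eq_iff)
qed (use cell_at_shift[of i j k l 0 1] in \<open>simp add: hdomino_def\<close>)

lemma dominoes_at_cell:
  assumes "is_domino N L X" "cell_at i j \<in> X"
  shows "X = vdomino (i - 1) j \<or> X = vdomino i j \<or> X = hdomino i (j - 1) \<or> X = hdomino i j"
  using assms(1)
proof (cases rule: is_domino_cases)
  case (1 p q)
  then consider "cell_at i j = cell_at p q" | "cell_at i j = cell_at (p + 1) q"
    using assms(2) unfolding vdomino_def by blast
  then show ?thesis
  proof cases
    case 2
    then have "cell_at (i - 1) j = cell_at p q" using cell_at_shift[of i j "p + 1" q "-1" 0] by simp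
    then show ?thesis using \<open>X = vdomino p q\<close> vdomino_eq_iff by simp
  qed (use \<open>X = vdomino p q\<close> vdomino_eq_iff in simp)
next
  case (2 p q)
  then consider "cell_at i j = cell_at p q" | "cell_at i j = cell_at p (q + 1)"
    using assms(2) unfolding hdomino_def by blast
  then show ?thesis
  proof cases
    case 2
    then have "cell_at i (j - 1) = cell_at p q" using cell_at_shift[of i j p "q + 1" 0 "-1"] by simp
    then show ?thesis using \<open>X = hdomino p q\<close> hdomino_eq_iff by simp
  qed (use \<open>X = hdomino p q\<close> hdomino_eq_iff in simp)
qed

definition vind :: "cell set set \<Rightarrow> int \<Rightarrow> int \<Rightarrow> int" where
  "vind T i j = of_bool (vdomino i j \<in> T)"

definition hind :: "cell set set \<Rightarrow> int \<Rightarrow> int \<Rightarrow> int" where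
  "hind T i j = of_bool (hdomino i j \<in> T)"

lemma vind_cases: "vind T i j = 0 \<or> vind T i j = 1"
  and hind_cases: "hind T i j = 0 \<or> hind T i j = 1"
  unfolding vind_def hind_def by simp_all

lemma tiling_covers_cell:
  assumes T: "is_tiling N L T"
  shows "vind T (i - 1) j + vind T i j + hind T i (j - 1) + hind T i j = 1"
proof -
  obtain X where X: "X \<in> T" "cell_at i j \<in> X" and uniq: "\<And>Y. Y \<in> T \<Longrightarrow> cell_at i j \<in> Y \<Longrightarrow> Y = X"
    using is_tiling_ex1[OF T cell_at_in_cells] by blast
  have cases: "X = vdomino (i - 1) j \<or> X = vdomino i j \<or> X = hdomino i (j - 1) \<or> X = hdomino i j"
    using dominoes_at_cell[OF is_tiling_domino[OF T X(1)] X(2)] .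
  have in_T: "Y \<in> T \<longleftrightarrow> Y = X" if "cell_at i j \<in> Y" for Y using uniq X(1) that by blast
  have "cell_at i j \<in> vdomino (i - 1) j" "cell_at i j \<in> vdomino i j"
    "cell_at i j \<in> hdomino i (j - 1)" "cell_at i j \<in> hdomino i j"
    unfolding vdomino_def hdomino_def by simp_all
  note ind = this[THEN in_T]
  have "vdomino (i - 1) j \<noteq> vdomino i j" "hdomino i (j - 1) \<noteq> hdomino i j"
    unfolding vdomino_eq_iff hdomino_eq_iff by (simp_all add: cell_at_eq_near)
  then show ?thesis
    using cases vdomino_neq_hdomino vdomino_neq_hdomino[THEN not_sym]
    unfolding vind_def hind_def ind by (elim disjE) simp_all
qed

lemma tiling_subset_if_ind_eq:
  assumes s: "is_tiling N L s"
    and "\<And>i j. vind s i j = vind t i j" and "\<And>i j. hind s i j = hind t i j"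
  shows "s \<subseteq> t"
proof
  fix X assume "X \<in> s"
  from is_tiling_domino[OF s this] show "X \<in> t"
  proof (cases rule: is_domino_cases)
    case (1 i j)
    then show ?thesis using \<open>X \<in> s\<close> assms(2)[of i j] unfolding vind_def by simp
  next
    case (2 i j)
    then show ?thesis using \<open>X \<in> s\<close> assms(3)[of i j] unfolding hind_def by simp
  qed
qed

lemma tiling_eqI:
  assumes "is_tiling N L s" "is_tiling N L t"
    and "\<And>i j. vind s i j = vind t i j" and "\<And>i j. hind s i j = hind t i j"
  shows "s = t"
  using tiling_subset_if_ind_eq[of s t] tiling_subset_if_ind_eq[of t s] assms by auto

section \<open>Flips\<close>

definition hblock :: "int \<Rightarrow> int \<Rightarrow> cell set set" where
  "hblock p q = {hdomino p q, hdomino (p + 1) q}"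

definition vblock :: "int \<Rightarrow> int \<Rightarrow> cell set set" where
  "vblock p q = {vdomino p q, vdomino p (q + 1)}"

lemma hpair_cell_at: "hpair N L (cell_at p q) = hblock p q"
  and vpair_cell_at: "vpair N L (cell_at p q) = vblock p q"
  unfolding hpair_def vpair_def hblock_def vblock_def hdomino_def vdomino_def
  by (simp_all add: down_cell_at right_cell_at)

lemma flip_iff_blocks:
  "flip N L T T' \<longleftrightarrow> (\<exists>p q. hblock p q \<subseteq> T \<and> T' = T - hblock p q \<union> vblock p q \<or>
                              vblock p q \<subseteq> T \<and> T' = T - vblock p q \<union> hblock p q)"
proof
  assume "flip N L T T'"
  then obtain c where "c \<in> cells N L"
    "hpair N L c \<subseteq> T \<and> T' = T - hpair N L c \<union> vpair N L c \<or>
     vpair N L c \<subseteq> T \<and> T' = T - vpair N L c \<union> hpair N L c"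
    unfolding flip_def by blast
  then show "\<exists>p q. hblock p q \<subseteq> T \<and> T' = T - hblock p q \<union> vblock p q \<or>
                    vblock p q \<subseteq> T \<and> T' = T - vblock p q \<union> hblock p q"
    using cells_eq_cell_at hpair_cell_at vpair_cell_at by metis
next
  assume "\<exists>p q. hblock p q \<subseteq> T \<and> T' = T - hblock p q \<union> vblock p q \<or>
                vblock p q \<subseteq> T \<and> T' = T - vblock p q \<union> hblock p q"
  then show "flip N L T T'"
    unfolding flip_def using cell_at_in_cells hpair_cell_at vpair_cell_at by metis
qed

lemma is_domino_block:
  "X \<in> hblock p q \<Longrightarrow> is_domino N L X" "X \<in> vblock p q \<Longrightarrow> is_domino N L X"
  unfolding hblock_def vblock_def using is_domino_hdomino is_domino_vdomino by auto

lemma block_corners_distinct: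
  "cell_at p q \<noteq> cell_at p (q + 1)" "cell_at p q \<noteq> cell_at (p + 1) q"
  "cell_at p q \<noteq> cell_at (p + 1) (q + 1)" "cell_at p (q + 1) \<noteq> cell_at (p + 1) q"
  "cell_at p (q + 1) \<noteq> cell_at (p + 1) (q + 1)" "cell_at (p + 1) q \<noteq> cell_at (p + 1) (q + 1)"
  by (simp_all add: cell_at_eq_near)

lemma hblock_dominoes_disjoint:
  "X \<in> hblock p q \<Longrightarrow> Y \<in> hblock p q \<Longrightarrow> X \<noteq> Y \<Longrightarrow> X \<inter> Y = {}"
  and vblock_dominoes_disjoint:
  "X \<in> vblock p q \<Longrightarrow> Y \<in> vblock p q \<Longrightarrow> X \<noteq> Y \<Longrightarrow> X \<inter> Y = {}"
  using block_corners_distinct[of p q]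
  unfolding hblock_def vblock_def hdomino_def vdomino_def by auto

lemma Union_hblock_eq_Union_vblock: "\<Union>(hblock p q) = \<Union>(vblock p q)"
  unfolding hblock_def vblock_def hdomino_def vdomino_def by auto

lemma vblock_disjoint_tiling:
  assumes T: "is_tiling N L T" and "hblock p q \<subseteq> T"
  shows "vblock p q \<inter> T = {}"
proof -
  have h: "hdomino p q \<in> T" using assms(2) unfolding hblock_def by simp
  have m: "cell_at p q \<in> hdomino p q" "cell_at p q \<in> vdomino p q"
    "cell_at p (q + 1) \<in> hdomino p q" "cell_at p (q + 1) \<in> vdomino p (q + 1)"
    unfolding hdomino_def vdomino_def by simp_all
  have "vdomino p q \<notin> T" "vdomino p (q + 1) \<notin> T"
    by (rule is_tiling_overlap_notin[OF T h m(1) m(2) vdomino_neq_hdomino],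
        rule is_tiling_overlap_notin[OF T h m(3) m(4) vdomino_neq_hdomino])
  then show ?thesis unfolding vblock_def by simp
qed

lemma hblock_disjoint_tiling:
  assumes T: "is_tiling N L T" and "vblock p q \<subseteq> T"
  shows "hblock p q \<inter> T = {}"
proof -
  have v: "vdomino p q \<in> T" using assms(2) unfolding vblock_def by simp
  have m: "cell_at p q \<in> vdomino p q" "cell_at p q \<in> hdomino p q"
    "cell_at (p + 1) q \<in> vdomino p q" "cell_at (p + 1) q \<in> hdomino (p + 1) q"
    unfolding hdomino_def vdomino_def by simp_all
  have "hdomino p q \<notin> T" "hdomino (p + 1) q \<notin> T"
    by (rule is_tiling_overlap_notin[OF T v m(1) m(2) vdomino_neq_hdomino[THEN not_sym]],
        rule is_tiling_overlap_notin[OF T v m(3) m(4) vdomino_neq_hdomino[THEN not_sym]])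
  then show ?thesis unfolding hblock_def by simp
qed

definition hv_flip :: "int \<Rightarrow> int \<Rightarrow> cell set set \<Rightarrow> cell set set \<Rightarrow> bool" where
  "hv_flip p q T T' \<longleftrightarrow> hblock p q \<subseteq> T \<and> vblock p q \<subseteq> T' \<and> T - hblock p q = T' - vblock p q"

lemma hv_flip_from_hblock:
  assumes "is_tiling N L T" "hblock p q \<subseteq> T"
  shows "is_tiling N L (T - hblock p q \<union> vblock p q)" "hv_flip p q T (T - hblock p q \<union> vblock p q)"
proof -
  show "is_tiling N L (T - hblock p q \<union> vblock p q)"
    using assms by (intro is_tiling_replace)
      (auto simp: Union_hblock_eq_Union_vblock is_domino_block vblock_dominoes_disjoint)
  show "hv_flip p q T (T - hblock p q \<union> vblock p q)"
    using vblock_disjoint_tiling[OF assms] assms(2) unfolding hv_flip_def by blast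
qed

lemma hv_flip_from_vblock:
  assumes "is_tiling N L T" "vblock p q \<subseteq> T"
  shows "is_tiling N L (T - vblock p q \<union> hblock p q)" "hv_flip p q (T - vblock p q \<union> hblock p q) T"
proof -
  show "is_tiling N L (T - vblock p q \<union> hblock p q)"
    using assms by (intro is_tiling_replace)
      (auto simp: Union_hblock_eq_Union_vblock is_domino_block hblock_dominoes_disjoint)
  show "hv_flip p q (T - vblock p q \<union> hblock p q) T"
    using hblock_disjoint_tiling[OF assms] assms(2) unfolding hv_flip_def by blast
qed

lemma flip_if_hv_flip:
  assumes "hv_flip p q T T'"
  shows "flip N L T T'" "flip N L T' T"
proof -
  have "hblock p q \<inter> vblock p q = {}"
    unfolding hblock_def vblock_def using vdomino_neq_hdomino by blast
  then have "T' = T - hblock p q \<union> vblock p q" "T = T' - vblock p q \<union> hblock p q"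
    using assms unfolding hv_flip_def by blast+
  then show "flip N L T T'" "flip N L T' T"
    using assms unfolding hv_flip_def flip_iff_blocks by blast+
qed

lemma hv_flip_if_flip:
  assumes "is_tiling N L T" "flip N L T T'"
  obtains p q where "hv_flip p q T T' \<or> hv_flip p q T' T"
  using assms(2) hv_flip_from_hblock(2)[OF assms(1)] hv_flip_from_vblock(2)[OF assms(1)]
  unfolding flip_iff_blocks by blast

lemma flip_sym: "is_tiling N L T \<Longrightarrow> flip N L T T' \<Longrightarrow> flip N L T' T"
  by (metis flip_if_hv_flip hv_flip_if_flip)

lemma vind_hv_flip:
  assumes "is_tiling N L T" "hv_flip p q T T'"
  shows "vind T' r j - vind T r j = of_bool (cell_at r j = cell_at p q \<or> cell_at r j = cell_at p (q + 1))"
proof -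
  have "vdomino r j \<notin> hblock p q" unfolding hblock_def using vdomino_neq_hdomino by simp
  moreover have "vdomino r j \<in> vblock p q \<longleftrightarrow> cell_at r j = cell_at p q \<or> cell_at r j = cell_at p (q + 1)"
    unfolding vblock_def vdomino_eq_iff[symmetric] by simp
  moreover have "vblock p q \<inter> T = {}"
    using vblock_disjoint_tiling assms unfolding hv_flip_def by blast
  ultimately show ?thesis using assms(2) unfolding vind_def hv_flip_def by auto
qed

lemma hind_hv_flip:
  assumes "hv_flip p q T T'"
  shows "hind T r j - hind T' r j = of_bool (cell_at r j = cell_at p q \<or> cell_at r j = cell_at (p + 1) q)"
proof -
  have "hdomino r j \<notin> vblock p q" unfolding vblock_def using vdomino_neq_hdomino[THEN not_sym] by simp
  moreover have "hdomino r j \<in> hblock p q \<longleftrightarrow> cell_at r j = cell_at p q \<or> cell_at r j = cell_at (p + 1) q"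
    unfolding hblock_def hdomino_eq_iff[symmetric] by simp
  ultimately show ?thesis using assms unfolding hind_def hv_flip_def by auto
qed

definition flip_edge :: "cell set set \<Rightarrow> cell set set \<Rightarrow> bool" where
  "flip_edge T T' \<longleftrightarrow> T \<in> tilings N L \<and> T' \<in> tilings N L \<and> flip N L T T'"

lemma flip_connected_eq:
  "flip_connected N L = {(T, T'). T \<in> tilings N L \<and> T' \<in> tilings N L \<and> flip_edge\<^sup>*\<^sup>* T T'}"
proof -
  have "(\<lambda>x y. x \<in> tilings N L \<and> y \<in> tilings N L \<and> flip N L x y) = flip_edge"
    unfolding flip_edge_def by (simp add: fun_eq_iff)
  then show ?thesis unfolding flip_connected_def by simp
qed

lemma symp_flip_edge: "symp flip_edge"
  unfolding flip_edge_def tilings_def by (auto intro: sympI flip_sym)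

lemma equiv_flip_connected: "equiv (tilings N L) (flip_connected N L)"
proof (rule equivI)
  show "flip_connected N L \<subseteq> tilings N L \<times> tilings N L"
    unfolding flip_connected_eq by blast
  show "refl_on (tilings N L) (flip_connected N L)"
    unfolding flip_connected_eq by (auto intro: refl_onI)
  show "sym (flip_connected N L)"
    unfolding flip_connected_eq using sympD[OF symp_rtranclp[OF symp_flip_edge]] by (auto intro: symI)
  show "trans (flip_connected N L)"
    unfolding flip_connected_eq by (auto intro: transI)
qed

section \<open>Thurston heights\<close>

text \<open>Heights live on lattice points; the point (i, j) is the top-left corner of cell (i, j), so
  the edge from (i, j) to (i, j + 1) separates the cells of vdomino (i - 1) j. Along an edge
  the height changes by 1 or, if a domino of T crosses the edge, by 3 in the opposite direction
  (Thurston's height function).\<close>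

definition is_height :: "cell set set \<Rightarrow> (int \<Rightarrow> int \<Rightarrow> int) \<Rightarrow> bool" where
  "is_height T h \<longleftrightarrow>
     (\<forall>i j. h i (j + 1) - h i j = - chess_sign i j * (1 - 4 * vind T (i - 1) j)) \<and>
     (\<forall>i j. h (i + 1) j - h i j = chess_sign i j * (1 - 4 * hind T i (j - 1)))"

lemma height_max_hblock:
  assumes h: "is_height T h" and max: "\<And>i j. h i j \<le> h i0 j0" and "chess_sign i0 j0 = 1"
  shows "hblock (i0 - 1) (j0 - 1) \<subseteq> T"
proof -
  have step: "h (i + 1) j - h i j = chess_sign i j * (1 - 4 * hind T i (j - 1))" for i j
    using h unfolding is_height_def by blast
  have "h (i0 + 1) j0 - h i0 j0 = 1 - 4 * hind T i0 (j0 - 1)"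
    using step[of i0 j0] assms(3) by simp
  moreover have "h (i0 - 1 + 1) j0 - h (i0 - 1) j0 = - (1 - 4 * hind T (i0 - 1) (j0 - 1))"
    using step[of "i0 - 1" j0] assms(3) chess_sign_diff1_left[of i0 j0] by simp
  ultimately have "hind T i0 (j0 - 1) = 1" "hind T (i0 - 1) (j0 - 1) = 1"
    using max[of "i0 + 1" j0] max[of "i0 - 1" j0] hind_cases[of T i0 "j0 - 1"]
      hind_cases[of T "i0 - 1" "j0 - 1"] by auto
  then show ?thesis unfolding hblock_def hind_def by simp
qed

lemma height_max_vblock:
  assumes h: "is_height T h" and max: "\<And>i j. h i j \<le> h i0 j0" and "chess_sign i0 j0 = -1"
  shows "vblock (i0 - 1) (j0 - 1) \<subseteq> T"
proof -
  have step: "h i (j + 1) - h i j = - chess_sign i j * (1 - 4 * vind T (i - 1) j)" for i j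
    using h unfolding is_height_def by simp
  have "h i0 (j0 + 1) - h i0 j0 = 1 - 4 * vind T (i0 - 1) j0"
    using step[of i0 j0] assms(3) by simp
  moreover have "h i0 (j0 - 1 + 1) - h i0 (j0 - 1) = - (1 - 4 * vind T (i0 - 1) (j0 - 1))"
    using step[of i0 "j0 - 1"] assms(3) chess_sign_diff1_right[of i0 j0] by simp
  ultimately have "vind T (i0 - 1) j0 = 1" "vind T (i0 - 1) (j0 - 1) = 1"
    using max[of i0 "j0 + 1"] max[of i0 "j0 - 1"] vind_cases[of T "i0 - 1" j0]
      vind_cases[of T "i0 - 1" "j0 - 1"] by auto
  then show ?thesis unfolding vblock_def vind_def by simp
qed

text \<open>Extended by the identity outside the torus, so that it is a bijection.\<close>

definition column_shift :: "int \<Rightarrow> cell \<Rightarrow> cell" where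
  "column_shift d x = (if x \<in> cells N L then cell_at (int (fst x)) (int (snd x) + d) else x)"

lemma column_shift_cell_at: "column_shift d (cell_at i j) = cell_at i (j + d)"
proof -
  have "cell_at i j = cell_at (int (fst (cell_at i j))) (int (snd (cell_at i j)))"
    by (rule cells_eq_cell_at[OF cell_at_in_cells])
  from cell_at_shift[OF this[symmetric], of 0 d] show ?thesis
    unfolding column_shift_def using cell_at_in_cells by simp
qed

lemma column_shift_inverse: "column_shift (- d) (column_shift d x) = x"
proof (cases "x \<in> cells N L")
  case True
  then have "x = cell_at (int (fst x)) (int (snd x))" by (rule cells_eq_cell_at)
  then show ?thesis using column_shift_cell_at by (metis add.right_neutral add_diff_cancel_right' diff_conv_add_uminus)
next
  case False
  then show ?thesis unfolding column_shift_def by simp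
qed

lemma column_shift_cells: "column_shift d ` cells N L = cells N L"
proof
  show "column_shift d ` cells N L \<subseteq> cells N L"
    unfolding column_shift_def using cell_at_in_cells by auto
  show "cells N L \<subseteq> column_shift d ` cells N L"
  proof
    fix x assume "x \<in> cells N L"
    moreover have "column_shift (- d) x \<in> cells N L"
      using \<open>x \<in> cells N L\<close> cell_at_in_cells unfolding column_shift_def by simp
    ultimately show "x \<in> column_shift d ` cells N L"
      using column_shift_inverse[of "- d" x] by (metis image_eqI minus_minus)
  qed
qed

lemma inj_column_shift: "inj (column_shift d)"
  by (metis column_shift_inverse injI)

lemma column_shift_vdomino: "column_shift d ` vdomino i j = vdomino i (j + d)"
  and column_shift_hdomino: "column_shift d ` hdomino i j = hdomino i (j + d)"
  unfolding vdomino_def hdomino_def by (simp_all add: column_shift_cell_at ac_simps)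

lemma tiling_image_column_shift_inverse:
  "tiling_image (column_shift (- d)) (tiling_image (column_shift d) T) = T"
  unfolding tiling_image_def image_image column_shift_inverse by simp

lemma inj_tiling_image_column_shift: "inj (tiling_image (column_shift d))"
  by (metis injI tiling_image_column_shift_inverse)

lemma tiling_image_column_shift_diff_Un:
  "tiling_image (column_shift d) (A - B \<union> C) =
     tiling_image (column_shift d) A - tiling_image (column_shift d) B \<union> tiling_image (column_shift d) C"
proof -
  have "inj ((`) (column_shift d))" using inj_column_shift by (simp add: inj_image_eq_iff inj_def)
  then show ?thesis unfolding tiling_image_def by (simp add: image_Un image_set_diff)
qed

lemma tiling_image_column_shift_hblock: "tiling_image (column_shift d) (hblock p q) = hblock p (q + d)"
  and tiling_image_column_shift_vblock: "tiling_image (column_shift d) (vblock p q) = vblock p (q + d)"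
  unfolding tiling_image_def hblock_def vblock_def
  by (simp_all add: column_shift_hdomino column_shift_vdomino ac_simps)

lemma flip_column_shift:
  assumes "flip N L T T'"
  shows "flip N L (tiling_image (column_shift d) T) (tiling_image (column_shift d) T')"
proof -
  let ?g = "tiling_image (column_shift d)"
  have mono: "?g A \<subseteq> ?g B" if "A \<subseteq> B" for A B
    using that unfolding tiling_image_def by blast
  obtain p q where "hblock p q \<subseteq> T \<and> T' = T - hblock p q \<union> vblock p q \<or>
                    vblock p q \<subseteq> T \<and> T' = T - vblock p q \<union> hblock p q"
    using assms unfolding flip_iff_blocks by blast
  then have "hblock p (q + d) \<subseteq> ?g T \<and> ?g T' = ?g T - hblock p (q + d) \<union> vblock p (q + d) \<or>
             vblock p (q + d) \<subseteq> ?g T \<and> ?g T' = ?g T - vblock p (q + d) \<union> hblock p (q + d)"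
    using mono[of "hblock p q" T] mono[of "vblock p q" T]
    by (elim disjE) (simp_all add: tiling_image_column_shift_diff_Un
      tiling_image_column_shift_hblock tiling_image_column_shift_vblock)
  then show ?thesis unfolding flip_iff_blocks by blast
qed

lemma is_tiling_column_shift:
  assumes T: "is_tiling N L T"
  shows "is_tiling N L (tiling_image (column_shift d) T)"
  unfolding is_tiling_def
proof (intro conjI ballI impI)
  fix D assume "D \<in> tiling_image (column_shift d) T"
  then obtain E where E: "E \<in> T" "D = column_shift d ` E" unfolding tiling_image_def by blast
  from is_tiling_domino[OF T E(1)] show "is_domino N L D"
    by (cases rule: is_domino_cases)
      (simp_all add: E(2) column_shift_vdomino column_shift_hdomino is_domino_vdomino is_domino_hdomino)
next
  fix D D' assume "D \<in> tiling_image (column_shift d) T" "D' \<in> tiling_image (column_shift d) T" "D \<noteq> D'"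
  then obtain E E' where "E \<in> T" "E' \<in> T" "E \<noteq> E'"
    "D = column_shift d ` E" "D' = column_shift d ` E'"
    unfolding tiling_image_def by blast
  then show "D \<inter> D' = {}"
    using T inj_column_shift unfolding is_tiling_def by (simp add: image_Int[symmetric])
next
  have "\<Union>(tiling_image (column_shift d) T) = column_shift d ` \<Union>T" unfolding tiling_image_def by blast
  then show "\<Union>(tiling_image (column_shift d) T) = cells N L"
    using T column_shift_cells unfolding is_tiling_def by simp
qed

lemma flip_edge_column_shift:
  "flip_edge T T' \<Longrightarrow> flip_edge (tiling_image (column_shift d) T) (tiling_image (column_shift d) T')"
  unfolding flip_edge_def tilings_def using is_tiling_column_shift flip_column_shift by simp

lemma column_shift_component_subset:
  assumes "T \<in> tilings N L"
  shows "tiling_image (column_shift d) ` (flip_connected N L `` {T}) \<subseteq>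
           flip_connected N L `` {tiling_image (column_shift d) T}"
proof
  fix T'' assume "T'' \<in> tiling_image (column_shift d) ` (flip_connected N L `` {T})"
  then obtain T' where "T' \<in> tilings N L" "flip_edge\<^sup>*\<^sup>* T T'" "T'' = tiling_image (column_shift d) T'"
    unfolding flip_connected_eq by blast
  moreover have "flip_edge\<^sup>*\<^sup>* (tiling_image (column_shift d) T) (tiling_image (column_shift d) T')"
    using \<open>flip_edge\<^sup>*\<^sup>* T T'\<close> by induction (auto intro: rtranclp.rtrancl_into_rtrancl flip_edge_column_shift)
  ultimately show "T'' \<in> flip_connected N L `` {tiling_image (column_shift d) T}"
    using assms is_tiling_column_shift unfolding flip_connected_eq tilings_def by simp
qed

lemma column_shift_component:
  assumes "T \<in> tilings N L"
  shows "tiling_image (column_shift d) ` (flip_connected N L `` {T}) =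
           flip_connected N L `` {tiling_image (column_shift d) T}"
proof
  let ?T' = "tiling_image (column_shift d) T"
  have "?T' \<in> tilings N L" using assms is_tiling_column_shift unfolding tilings_def by simp
  from column_shift_component_subset[OF this, of "- d"]
  have "tiling_image (column_shift (- d)) ` (flip_connected N L `` {?T'}) \<subseteq> flip_connected N L `` {T}"
    by (simp add: tiling_image_column_shift_inverse)
  then have "tiling_image (column_shift d) ` tiling_image (column_shift (- d)) ` (flip_connected N L `` {?T'})
      \<subseteq> tiling_image (column_shift d) ` (flip_connected N L `` {T})"
    by (rule image_mono)
  then show "flip_connected N L `` {?T'} \<subseteq> tiling_image (column_shift d) ` (flip_connected N L `` {T})"
    using tiling_image_column_shift_inverse[of "- d"] by (simp add: image_image)
qed (rule column_shift_component_subset[OF assms])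

end

section \<open>Relative heights\<close>

locale odd_even_torus = torus_grid +
  assumes odd_N: "odd N" and even_L: "even L"
begin

lemma chess_sign_add_N: "chess_sign (i + int N) j = - chess_sign i j"
  and chess_sign_add_L: "chess_sign i (j + int L) = chess_sign i j"
  using odd_N even_L unfolding chess_sign_def by auto

lemma vind_add_N: "vind T (i + int N) j = vind T i j"
  and vind_add_L: "vind T i (j + int L) = vind T i j"
  and hind_add_N: "hind T (i + int N) j = hind T i j"
  and hind_add_L: "hind T i (j + int L) = hind T i j"
  unfolding vind_def hind_def by simp_all

text \<open>Since N is odd, going once around the torus vertically swaps the two colour classes of the
  checkerboard, so relative heights are antiperiodic in that direction.\<close>

definition twisted :: "(int \<Rightarrow> int \<Rightarrow> int) \<Rightarrow> bool" where
  "twisted f \<longleftrightarrow> (\<forall>i j. f (i + int N) j = - f i j) \<and> (\<forall>i j. f i (j + int L) = f i j)"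

definition down_step :: "cell set set \<Rightarrow> cell set set \<Rightarrow> int \<Rightarrow> int \<Rightarrow> int" where
  "down_step s t i j = chess_sign i j * (hind s i (j - 1) - hind t i (j - 1))"

definition right_step :: "cell set set \<Rightarrow> cell set set \<Rightarrow> int \<Rightarrow> int \<Rightarrow> int" where
  "right_step s t i j = chess_sign i j * (vind t (i - 1) j - vind s (i - 1) j)"

text \<open>One quarter of the difference of the Thurston heights of t and s.\<close>

definition rel_height :: "cell set set \<Rightarrow> cell set set \<Rightarrow> (int \<Rightarrow> int \<Rightarrow> int) \<Rightarrow> bool" where
  "rel_height s t f \<longleftrightarrow>
     (\<forall>i j. f (i + 1) j - f i j = down_step s t i j) \<and>
     (\<forall>i j. f i (j + 1) - f i j = right_step s t i j) \<and> twisted f"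

definition height_related :: "cell set set \<Rightarrow> cell set set \<Rightarrow> bool" where
  "height_related s t \<longleftrightarrow> (\<exists>f. rel_height s t f)"

lemma rel_height_sym:
  assumes "rel_height s t f"
  shows "rel_height t s (\<lambda>i j. - f i j)"
  unfolding rel_height_def twisted_def
proof (intro conjI allI)
  fix i j
  have "f (i + 1) j - f i j = down_step s t i j" "f i (j + 1) - f i j = right_step s t i j"
    "f (i + int N) j = - f i j" "f i (j + int L) = f i j"
    using assms unfolding rel_height_def twisted_def by blast+
  then show "- f (i + 1) j - - f i j = down_step t s i j" "- f i (j + 1) - - f i j = right_step t s i j"
    "- f (i + int N) j = - (- f i j)" "- f i (j + int L) = - f i j"
    unfolding down_step_def right_step_def by (simp_all add: algebra_simps)
qed

lemma rel_height_trans: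
  assumes "rel_height s t f" "rel_height t u g"
  shows "rel_height s u (\<lambda>i j. f i j + g i j)"
  unfolding rel_height_def twisted_def
proof (intro conjI allI)
  fix i j
  have "f (i + 1) j - f i j = down_step s t i j" "f i (j + 1) - f i j = right_step s t i j"
    "f (i + int N) j = - f i j" "f i (j + int L) = f i j"
    "g (i + 1) j - g i j = down_step t u i j" "g i (j + 1) - g i j = right_step t u i j"
    "g (i + int N) j = - g i j" "g i (j + int L) = g i j"
    using assms unfolding rel_height_def twisted_def by blast+
  then show "f (i + 1) j + g (i + 1) j - (f i j + g i j) = down_step s u i j"
    "f i (j + 1) + g i (j + 1) - (f i j + g i j) = right_step s u i j"
    "f (i + int N) j + g (i + int N) j = - (f i j + g i j)"
    "f i (j + int L) + g i (j + int L) = f i j + g i j"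
    unfolding down_step_def right_step_def by (simp_all add: algebra_simps)
qed

lemma height_related_refl: "height_related s s"
  unfolding height_related_def rel_height_def down_step_def right_step_def twisted_def
  by (intro exI[of _ "\<lambda>_ _. 0"]) simp

lemma height_related_trans: "height_related s t \<Longrightarrow> height_related t u \<Longrightarrow> height_related s u"
  unfolding height_related_def using rel_height_trans by blast

definition flip_bump :: "int \<Rightarrow> int \<Rightarrow> int \<Rightarrow> int \<Rightarrow> int" where
  "flip_bump p q i j = (if cell_at i j = cell_at (p + 1) (q + 1) then - chess_sign i j else 0)"

lemma rel_height_hv_flip:
  assumes "is_tiling N L T" "hv_flip p q T T'"
  shows "rel_height T T' (flip_bump p q)"
  unfolding rel_height_def
proof (intro conjI allI)
  fix i j
  have "cell_at (i + 1) j = cell_at (p + 1) (q + 1) \<longleftrightarrow> cell_at i (j - 1) = cell_at p q"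
    "cell_at i j = cell_at (p + 1) (q + 1) \<longleftrightarrow> cell_at i (j - 1) = cell_at (p + 1) q"
    "cell_at i (j + 1) = cell_at (p + 1) (q + 1) \<longleftrightarrow> cell_at (i - 1) j = cell_at p q"
    "cell_at i j = cell_at (p + 1) (q + 1) \<longleftrightarrow> cell_at (i - 1) j = cell_at p (q + 1)"
    by (simp_all add: cell_at_eq_iff algebra_simps)
  moreover have "cell_at p q \<noteq> cell_at (p + 1) q" "cell_at p q \<noteq> cell_at p (q + 1)"
    by (simp_all add: block_corners_distinct)
  ultimately show "flip_bump p q (i + 1) j - flip_bump p q i j = down_step T T' i j"
    and "flip_bump p q i (j + 1) - flip_bump p q i j = right_step T T' i j"
    unfolding flip_bump_def down_step_def right_step_def hind_hv_flip[OF assms(2)]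
      vind_hv_flip[OF assms] chess_sign_add1_left chess_sign_add1_right
    by auto
next
  show "twisted (flip_bump p q)"
    unfolding twisted_def flip_bump_def by (simp add: chess_sign_add_N chess_sign_add_L)
qed

lemma height_related_flip:
  assumes "is_tiling N L T" "is_tiling N L T'" "flip N L T T'"
  shows "height_related T T'"
proof -
  obtain p q where "hv_flip p q T T' \<or> hv_flip p q T' T"
    using hv_flip_if_flip[OF assms(1,3)] .
  then show ?thesis
    using rel_height_hv_flip[OF assms(1)] rel_height_sym[OF rel_height_hv_flip[OF assms(2)]]
    unfolding height_related_def by blast
qed

lemma height_related_if_flip_connected: "flip_edge\<^sup>*\<^sup>* s t \<Longrightarrow> height_related s t"
proof (induction rule: rtranclp_induct)
  case (step t u)
  then show ?case
    using height_related_flip height_related_trans unfolding flip_edge_def tilings_def by blast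
qed (rule height_related_refl)

lemma steps_closed:
  assumes "is_tiling N L s" "is_tiling N L t"
  shows "down_step s t i (j + 1) - down_step s t i j = right_step s t (i + 1) j - right_step s t i j"
proof -
  have balance: "hind s i j - hind t i j + hind s i (j - 1) - hind t i (j - 1) =
      vind t i j - vind s i j + vind t (i - 1) j - vind s (i - 1) j"
    using tiling_covers_cell[OF assms(1), of i j] tiling_covers_cell[OF assms(2), of i j] by linarith
  have "down_step s t i (j + 1) - down_step s t i j =
      - chess_sign i j * (hind s i j - hind t i j + hind s i (j - 1) - hind t i (j - 1))"
    unfolding down_step_def chess_sign_add1_right by (simp add: algebra_simps)
  also have "\<dots> = right_step s t (i + 1) j - right_step s t i j"
    unfolding balance right_step_def chess_sign_add1_left by (simp add: algebra_simps)
  finally show ?thesis .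
qed

lemma steps_twisted:
  "down_step s t (i + int N) j = - down_step s t i j" "down_step s t i (j + int L) = down_step s t i j"
  "right_step s t (i + int N) j = - right_step s t i j" "right_step s t i (j + int L) = right_step s t i j"
  using vind_add_N[of _ "i - 1"] hind_add_L[of _ i "j - 1"]
  unfolding down_step_def right_step_def
  by (simp_all add: chess_sign_add_N chess_sign_add_L hind_add_N vind_add_L algebra_simps)

text \<open>The signed number of vertical dominoes crossing the boundary between rows r and r + 1.\<close>

definition vflux :: "cell set set \<Rightarrow> int \<Rightarrow> int" where
  "vflux T r = (\<Sum>k<L. chess_sign 0 (int k) * vind T r (int k))"

text \<open>Row r has as many black as white cells (L is even); the horizontal dominoes inside it
  cover equally many of each, so the fluxes through its two boundaries cancel.\<close>

lemma vflux_step: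
  assumes T: "is_tiling N L T"
  shows "vflux T (r - 1) + vflux T r = 0"
proof -
  let ?c = "\<lambda>k. chess_sign 0 (int k)"
  have "(\<Sum>k<L. ?c k * (vind T (r - 1) (int k) + vind T r (int k) + hind T r (int k - 1) + hind T r (int k)))
      = (\<Sum>k<L. ?c k)"
    using tiling_covers_cell[OF T] by simp
  also have "\<dots> = 0" using sum_chess_sign_lessThan(2)[of L] even_L by simp
  finally have covered: "vflux T (r - 1) + vflux T r +
      (\<Sum>k<L. ?c k * hind T r (int k - 1)) + (\<Sum>k<L. ?c k * hind T r (int k)) = 0"
    unfolding vflux_def by (simp add: algebra_simps sum.distrib)
  let ?g = "\<lambda>x. chess_sign 0 x * hind T r (x - 1)"
  have "?g (int L) = ?g 0" using hind_add_L[of T r "-1"] chess_sign_add_L[of 0 0] by simp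
  then have "(\<Sum>k<L. ?g (int k + 1)) = (\<Sum>k<L. ?g (int k))" by (rule sum_lessThan_shift_periodic)
  then have "(\<Sum>k<L. ?c k * hind T r (int k - 1)) = - (\<Sum>k<L. ?c k * hind T r (int k))"
    by (simp add: chess_sign_add1_right sum_negf)
  with covered show ?thesis by simp
qed

lemma vflux_zero:
  assumes T: "is_tiling N L T"
  shows "vflux T r = 0"
proof -
  have alt: "vflux T (x + 1) = - vflux T x" for x using vflux_step[OF T, of "x + 1"] by simp
  have "vflux T (r + int k) = (-1) ^ k * vflux T r" for k
  proof (induction k)
    case (Suc k)
    then show ?case using alt[of "r + int k"] by (simp add: ac_simps)
  qed simp
  from this[of N] have "vflux T (r + int N) = - vflux T r" using odd_N by simp
  moreover have "vflux T (r + int N) = vflux T r" unfolding vflux_def vind_add_N ..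
  ultimately show ?thesis by simp
qed

lemma sum_right_step_row:
  assumes "is_tiling N L s" "is_tiling N L t"
  shows "(\<Sum>k<L. right_step s t i (int k)) = 0"
proof -
  have "(\<Sum>k<L. right_step s t i (int k)) = chess_sign i 0 * (vflux t (i - 1) - vflux s (i - 1))"
    unfolding right_step_def vflux_def
    by (subst chess_sign_split) (simp add: sum_distrib_left sum_subtractf algebra_simps)
  then show ?thesis using vflux_zero assms by simp
qed

lemma step_potential_periodic:
  assumes s: "is_tiling N L s" and t: "is_tiling N L t"
    and F: "\<And>i j. F (i + 1) j - F i j = down_step s t i j"
      "\<And>i j. F i (j + 1) - F i j = right_step s t i j"
  shows "F i (j + int L) = F i j"
proof -
  define D where "D i j = F i (j + int L) - F i j" for i j
  have "D (i + 1) j = D i j" for i j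
    using F(1)[of i "j + int L"] F(1)[of i j] steps_twisted(2)[of s t i j] unfolding D_def by linarith
  moreover have "D i (j + 1) = D i j" for i j
  proof -
    have e: "j + 1 + int L = j + int L + 1" by simp
    show ?thesis
      using F(2)[of i "j + int L"] F(2)[of i j] steps_twisted(4)[of s t i j] unfolding D_def e by linarith
  qed
  ultimately have "D i j = D 0 0" by (rule int2_const_if_step_invariant)
  also have "D 0 0 = 0"
    using sum_steps[of "F 0" "right_step s t 0" L] F(2) sum_right_step_row[OF s t] unfolding D_def by simp
  finally show ?thesis unfolding D_def by simp
qed

lemma step_potential_twist:
  assumes F: "\<And>i j. F (i + 1) j - F i j = down_step s t i j"
      "\<And>i j. F i (j + 1) - F i j = right_step s t i j"
  shows "F (i + int N) j + F i j = 2 * F 0 0 + (\<Sum>k<N. down_step s t (int k) 0)"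
proof -
  define E where "E i j = F (i + int N) j + F i j" for i j
  have "E (i + 1) j = E i j" for i j
  proof -
    have e: "i + 1 + int N = i + int N + 1" by simp
    show ?thesis
      using F(1)[of "i + int N" j] F(1)[of i j] steps_twisted(1)[of s t i j] unfolding E_def e by linarith
  qed
  moreover have "E i (j + 1) = E i j" for i j
    using F(2)[of "i + int N" j] F(2)[of i j] steps_twisted(3)[of s t i j] unfolding E_def by linarith
  ultimately have "E i j = E 0 0" by (rule int2_const_if_step_invariant)
  also have "E 0 0 = 2 * F 0 0 + (\<Sum>k<N. down_step s t (int k) 0)"
    using sum_steps[of "\<lambda>x. F x 0" "\<lambda>x. down_step s t x 0" N] F(1) unfolding E_def by simp
  finally show ?thesis unfolding E_def .
qed

lemma height_related_if_even:
  assumes s: "is_tiling N L s" and t: "is_tiling N L t"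
    and even: "even (\<Sum>k<N. down_step s t (int k) 0)"
  shows "height_related s t"
proof -
  obtain F where F: "\<And>i j. F (i + 1) j - F i j = down_step s t i j"
    "\<And>i j. F i (j + 1) - F i j = right_step s t i j"
    using discrete_poincare[of "down_step s t" "right_step s t"] steps_closed[OF s t] by metis
  define c where "c = 2 * F 0 0 + (\<Sum>k<N. down_step s t (int k) 0)"
  have "even c" using even unfolding c_def by simp
  then have "rel_height s t (\<lambda>i j. F i j - c div 2)"
    using F step_potential_periodic[OF s t F] step_potential_twist[OF F, folded c_def]
    unfolding rel_height_def twisted_def by (auto simp: algebra_simps)
  then show ?thesis unfolding height_related_def by blast
qed

section \<open>The brick tilings\<close>

lemma cell_at_eq_parity:
  assumes "cell_at i j = cell_at k l"
  shows "even j = even l"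
proof -
  have "int L dvd j - l" using assms unfolding cell_at_eq_iff by simp
  moreover have "2 dvd int L" using even_L by simp
  ultimately have "even (j - l)" using dvd_trans by blast
  then show ?thesis by simp
qed

definition bricks :: "bool \<Rightarrow> cell set set" where
  "bricks p = {hdomino i j | i j. even j = p}"

lemma hind_bricks: "hind (bricks p) i j = of_bool (even j = p)"
proof -
  have "hdomino i j \<in> bricks p \<longleftrightarrow> even j = p"
    unfolding bricks_def by (auto simp: hdomino_eq_iff dest: cell_at_eq_parity)
  then show ?thesis unfolding hind_def by simp
qed

lemma vind_bricks: "vind (bricks p) i j = 0"
  unfolding vind_def bricks_def using vdomino_neq_hdomino by auto

lemma is_tiling_bricks: "is_tiling N L (bricks p)"
  unfolding is_tiling_def
proof (intro conjI ballI impI)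
  fix D assume "D \<in> bricks p"
  then show "is_domino N L D" unfolding bricks_def using is_domino_hdomino by blast
next
  fix D D' assume "D \<in> bricks p" "D' \<in> bricks p" "D \<noteq> D'"
  then obtain i j i' j' where D: "D = hdomino i j" "D' = hdomino i' j'" "even j = p" "even j' = p"
    unfolding bricks_def by blast
  then have "cell_at i j \<noteq> cell_at i' j'" using \<open>D \<noteq> D'\<close> hdomino_eq_iff by blast
  moreover have "cell_at i (j + 1) \<noteq> cell_at i' (j' + 1)"
    using calculation cell_at_shift[of i "j + 1" i' "j' + 1" 0 "- 1"] by auto
  moreover have "cell_at i j \<noteq> cell_at i' (j' + 1)" "cell_at i (j + 1) \<noteq> cell_at i' j'"
    using D(3,4) cell_at_eq_parity[of i j i' "j' + 1"] cell_at_eq_parity[of i "j + 1" i' j'] by auto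
  ultimately show "D \<inter> D' = {}" unfolding D hdomino_def by auto
next
  have "x \<in> \<Union>(bricks p)" if "x \<in> cells N L" for x
  proof -
    define a b where "a = int (fst x)" and "b = int (snd x)"
    have x: "x = cell_at a b" unfolding a_def b_def using cells_eq_cell_at[OF that] .
    show ?thesis
    proof (cases "even b = p")
      case True
      then have "hdomino a b \<in> bricks p" unfolding bricks_def by blast
      moreover have "x \<in> hdomino a b" unfolding x hdomino_def by simp
      ultimately show ?thesis by blast
    next
      case False
      then have "even (b - 1) = p" by simp
      then have "hdomino a (b - 1) \<in> bricks p" unfolding bricks_def by blast
      moreover have "x \<in> hdomino a (b - 1)" unfolding x hdomino_def by simp
      ultimately show ?thesis by blast
    qed
  qed
  moreover have "\<Union>(bricks p) \<subseteq> cells N L"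
    unfolding bricks_def hdomino_def using cell_at_in_cells by auto
  ultimately show "\<Union>(bricks p) = cells N L" by blast
qed

lemma column_shift_bricks:
  assumes "odd d"
  shows "tiling_image (column_shift d) (bricks p) = bricks (\<not> p)"
proof (intro set_eqI iffI)
  fix D assume "D \<in> tiling_image (column_shift d) (bricks p)"
  then obtain i j where "D = column_shift d ` hdomino i j" "even j = p"
    unfolding tiling_image_def bricks_def by blast
  then have "D = hdomino i (j + d)" "even (j + d) = (\<not> p)"
    using assms by (simp_all add: column_shift_hdomino)
  then show "D \<in> bricks (\<not> p)" unfolding bricks_def by blast
next
  fix D assume "D \<in> bricks (\<not> p)"
  then obtain i j where D: "D = hdomino i j" "even j = (\<not> p)" unfolding bricks_def by blast
  then have "even (j - d) = p" using assms by simp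
  then have "hdomino i (j - d) \<in> bricks p" unfolding bricks_def by blast
  moreover have "D = column_shift d ` hdomino i (j - d)" using D(1) by (simp add: column_shift_hdomino)
  ultimately show "D \<in> tiling_image (column_shift d) (bricks p)" unfolding tiling_image_def by blast
qed

lemma sum_down_step_bricks:
  "(\<Sum>k<N. down_step (bricks p) t (int k) 0) =
     of_bool (\<not> p) - (\<Sum>k<N. chess_sign (int k) 0 * hind t (int k) (- 1))"
proof -
  have "(\<Sum>k<N. down_step (bricks p) t (int k) 0) =
      (\<Sum>k<N. of_bool (\<not> p) * chess_sign (int k) 0 - chess_sign (int k) 0 * hind t (int k) (- 1))"
    unfolding down_step_def hind_bricks by (intro sum.cong) (auto simp: algebra_simps)
  also have "\<dots> = of_bool (\<not> p) - (\<Sum>k<N. chess_sign (int k) 0 * hind t (int k) (- 1))"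
    using sum_chess_sign_lessThan(1)[of N] odd_N by (simp add: sum_subtractf sum_distrib_left[symmetric])
  finally show ?thesis .
qed

lemma height_related_bricks:
  assumes "is_tiling N L t"
  shows "height_related (bricks True) t \<or> height_related (bricks False) t"
proof -
  let ?X = "\<Sum>k<N. chess_sign (int k) 0 * hind t (int k) (- 1)"
  have "even (\<Sum>k<N. down_step (bricks True) t (int k) 0) \<or> even (\<Sum>k<N. down_step (bricks False) t (int k) 0)"
    unfolding sum_down_step_bricks by (cases "even ?X") simp_all
  then show ?thesis using height_related_if_even[OF is_tiling_bricks assms] by blast
qed

lemma not_height_related_bricks: "\<not> height_related (bricks True) (bricks False)"
proof
  assume "height_related (bricks True) (bricks False)"
  then obtain f where f: "rel_height (bricks True) (bricks False) f" unfolding height_related_def by blast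
  have "f (x + 1) 0 - f x 0 = - chess_sign x 0" for x
    using f unfolding rel_height_def down_step_def hind_bricks by simp
  then have "f (int N) 0 - f 0 0 = - 1"
    using sum_steps[of "\<lambda>x. f x 0" "\<lambda>x. - chess_sign x 0" N] sum_chess_sign_lessThan(1)[of N] odd_N
    by (simp add: sum_negf)
  moreover have "f (0 + int N) 0 = - f 0 0" using f unfolding rel_height_def twisted_def by blast
  ultimately have "2 * f 0 0 = 1" by simp
  then show False by presburger
qed

section \<open>Connecting tilings by descent\<close>

lemma twisted_abs_mod:
  assumes "twisted f"
  shows "\<bar>f (i mod int N) (j mod int L)\<bar> = \<bar>f i j\<bar>"
proof -
  have "\<bar>f (x + int N) y\<bar> = \<bar>f x y\<bar>" "\<bar>f x (y + int L)\<bar> = \<bar>f x y\<bar>" for x y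
    using assms unfolding twisted_def by simp_all
  then show ?thesis
    using periodic_mod_eq[of "\<lambda>x. \<bar>f x (j mod int L)\<bar>" "int N" i]
      periodic_mod_eq[of "\<lambda>y. \<bar>f i y\<bar>" "int L" j]
    by simp
qed

definition mass :: "(int \<Rightarrow> int \<Rightarrow> int) \<Rightarrow> int" where
  "mass f = (\<Sum>(i, j) \<in> {0..<int N} \<times> {0..<int L}. \<bar>f i j\<bar>)"

lemma mass_decrease:
  assumes f: "twisted f" and f': "twisted f'"
    and same: "\<And>i j. cell_at i j \<noteq> cell_at i0 j0 \<Longrightarrow> f' i j = f i j"
    and dec: "f' i0 j0 = f i0 j0 - 1" and pos: "1 \<le> f i0 j0"
  shows "mass f' = mass f - 1"
proof -
  define B where "B = {0..<int N} \<times> {0..<int L}"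
  define a b where "a = i0 mod int N" and "b = j0 mod int L"
  have ab: "(a, b) \<in> B" "finite B" using N_ge3 L_ge3 unfolding B_def a_def b_def by auto
  have off_ab: "f' i j = f i j" if "(i, j) \<in> B - {(a, b)}" for i j
  proof (rule same)
    have "i mod int N = i" "j mod int L = j" using that unfolding B_def by auto
    then show "cell_at i j \<noteq> cell_at i0 j0"
      using that unfolding cell_at_eq_iff a_def b_def by (auto simp: mod_eq_dvd_iff[symmetric])
  qed
  have rest: "(\<Sum>(i, j) \<in> B - {(a, b)}. \<bar>f' i j\<bar>) = (\<Sum>(i, j) \<in> B - {(a, b)}. \<bar>f i j\<bar>)"
  proof (rule sum.cong[OF refl])
    fix x assume "x \<in> B - {(a, b)}"
    then show "(case x of (i, j) \<Rightarrow> \<bar>f' i j\<bar>) = (case x of (i, j) \<Rightarrow> \<bar>f i j\<bar>)"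
      using off_ab by (cases x) simp
  qed
  have "\<bar>f' a b\<bar> = \<bar>f a b\<bar> - 1"
    using twisted_abs_mod[OF f, of i0 j0] twisted_abs_mod[OF f', of i0 j0] dec pos
    unfolding a_def b_def by simp
  then show ?thesis
    unfolding mass_def B_def[symmetric] sum.remove[OF ab(2,1)] rest by simp
qed

lemma rel_height_zero:
  assumes "is_tiling N L s" "is_tiling N L t" "rel_height s t f" "\<And>i j. f i j = 0"
  shows "s = t"
proof (rule tiling_eqI[OF assms(1,2)])
  have sign: "chess_sign i j \<noteq> 0" for i j using chess_sign_cases[of i j] by auto
  fix i j
  show "vind s i j = vind t i j"
    using assms(3,4) sign[of "i + 1" j] unfolding rel_height_def right_step_def by force
  show "hind s i j = hind t i j"
    using assms(3,4) sign[of i "j + 1"] unfolding rel_height_def down_step_def by force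
qed

lemma is_height_rel_height:
  assumes "is_height s h" "rel_height s t f"
  shows "is_height t (\<lambda>i j. h i j + 4 * f i j)"
  unfolding is_height_def
proof (intro conjI allI)
  fix i j
  have "h i (j + 1) - h i j = - chess_sign i j * (1 - 4 * vind s (i - 1) j)"
    "h (i + 1) j - h i j = chess_sign i j * (1 - 4 * hind s i (j - 1))"
    "f (i + 1) j - f i j = down_step s t i j" "f i (j + 1) - f i j = right_step s t i j"
    using assms unfolding is_height_def rel_height_def by blast+
  then show "h i (j + 1) + 4 * f i (j + 1) - (h i j + 4 * f i j) = - chess_sign i j * (1 - 4 * vind t (i - 1) j)"
    "h (i + 1) j + 4 * f (i + 1) j - (h i j + 4 * f i j) = chess_sign i j * (1 - 4 * hind t i (j - 1))"
    unfolding down_step_def right_step_def by (simp_all add: algebra_simps)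
qed

lemma flip_at_height_max:
  assumes t: "is_tiling N L t" and f: "rel_height s t f"
    and h: "is_height t g" and max: "\<And>i j. g i j \<le> g i0 j0"
  obtains t' f' where "is_tiling N L t'" "flip N L t t'" "rel_height s t' f'"
    "\<And>i j. cell_at i j \<noteq> cell_at i0 j0 \<Longrightarrow> f' i j = f i j" "f' i0 j0 = f i0 j0 - 1"
proof -
  let ?p = "i0 - 1" and ?q = "j0 - 1"
  have bump: "flip_bump ?p ?q i j = (if cell_at i j = cell_at i0 j0 then - chess_sign i j else 0)" for i j
    unfolding flip_bump_def by simp
  consider "chess_sign i0 j0 = 1" | "chess_sign i0 j0 = -1" using chess_sign_cases by blast
  then show ?thesis
  proof cases
    case 1
    let ?t' = "t - hblock ?p ?q \<union> vblock ?p ?q"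
    have "hblock ?p ?q \<subseteq> t" using height_max_hblock[OF h max 1] .
    note flip = hv_flip_from_hblock[OF t this]
    show ?thesis
    proof (rule that[OF flip(1) flip_if_hv_flip(1)[OF flip(2)]])
      show "rel_height s ?t' (\<lambda>i j. f i j + flip_bump ?p ?q i j)"
        using rel_height_trans[OF f rel_height_hv_flip[OF t flip(2)]] .
    qed (use bump 1 in simp_all)
  next
    case 2
    let ?t' = "t - vblock ?p ?q \<union> hblock ?p ?q"
    have "vblock ?p ?q \<subseteq> t" using height_max_vblock[OF h max 2] .
    note flip = hv_flip_from_vblock[OF t this]
    show ?thesis
    proof (rule that[OF flip(1) flip_if_hv_flip(2)[OF flip(2)]])
      show "rel_height s ?t' (\<lambda>i j. f i j + - flip_bump ?p ?q i j)"
        using rel_height_trans[OF f rel_height_sym[OF rel_height_hv_flip[OF flip(1,2)]]] .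
    qed (use bump 2 in simp_all)
  qed
qed

text \<open>Since h has range at most 3, a maximum of the Thurston height h + 4 f of t is a point where
  f is positive, and the flip there decreases the mass of f.\<close>

lemma flip_connected_if_rel_height:
  assumes s: "is_tiling N L s" and hs: "is_height s h"
    and range: "\<And>i j. lo \<le> h i j \<and> h i j \<le> lo + 3"
    and per: "\<And>i j. h (i + 2 * int N) j = h i j" "\<And>i j. h i (j + int L) = h i j"
  shows "is_tiling N L t \<Longrightarrow> rel_height s t f \<Longrightarrow> flip_edge\<^sup>*\<^sup>* t s"
proof (induction "nat (mass f)" arbitrary: t f rule: less_induct)
  case less
  note t = less.prems(1) and f = less.prems(2)
  show ?case
  proof (cases "\<forall>i j. f i j = 0")
    case True
    then show ?thesis using rel_height_zero[OF s t f] by simp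
  next
    case False
    then obtain a b where ab: "f a b \<noteq> 0" by blast
    have anti: "f (i + int N) j = - f i j" "f i (j + int L) = f i j" for i j
      using f unfolding rel_height_def twisted_def by simp_all
    let ?g = "\<lambda>i j. h i j + 4 * f i j"
    obtain i0 j0 where max: "\<And>i j. ?g i j \<le> ?g i0 j0"
    proof (rule periodic2_has_max[of "2 * int N" "int L" ?g])
      show "?g (i + 2 * int N) j = ?g i j" "?g i (j + int L) = ?g i j" for i j
        using anti[of "i + int N" j] anti[of i j] per by (simp_all add: algebra_simps)
    qed (use N_ge3 L_ge3 in auto)
    have pos: "1 \<le> f i0 j0" using antiperiodic_max_pos[OF anti(1) range max ab] .
    obtain t' f' where t': "is_tiling N L t'" "flip N L t t'" "rel_height s t' f'"
      and same: "\<And>i j. cell_at i j \<noteq> cell_at i0 j0 \<Longrightarrow> f' i j = f i j" and dec: "f' i0 j0 = f i0 j0 - 1"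
      using flip_at_height_max[OF t f is_height_rel_height[OF hs f] max] by blast
    have "twisted f" "twisted f'" using f t'(3) unfolding rel_height_def by blast+
    then have "mass f' = mass f - 1" using mass_decrease same dec pos by blast
    moreover have "0 \<le> mass f'" unfolding mass_def by (rule sum_nonneg) auto
    ultimately have "flip_edge\<^sup>*\<^sup>* t' s" using less.hyps[OF _ t'(1,3)] by simp
    moreover have "flip_edge t t'" using t t'(1,2) unfolding flip_edge_def tilings_def by simp
    ultimately show ?thesis by (rule converse_rtranclp_into_rtranclp[rotated])
  qed
qed

definition brick_height :: "bool \<Rightarrow> int \<Rightarrow> int \<Rightarrow> int" where
  "brick_height p i j = (if odd i then (if p then 1 else -3) else 0) + (if odd j then (if odd i then 1 else -1) else 0)"

lemma is_height_brick_height: "is_height (bricks p) (brick_height p)"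
  unfolding is_height_def brick_height_def chess_sign_def vind_bricks hind_bricks by auto

lemma flip_connected_to_bricks:
  assumes "is_tiling N L t"
  shows "flip_edge\<^sup>*\<^sup>* t (bricks True) \<or> flip_edge\<^sup>*\<^sup>* t (bricks False)"
proof -
  have "flip_edge\<^sup>*\<^sup>* t (bricks p)" if related: "height_related (bricks p) t" for p
  proof -
    obtain f where "rel_height (bricks p) t f" using related unfolding height_related_def by blast
    show ?thesis
    proof (rule flip_connected_if_rel_height[OF is_tiling_bricks is_height_brick_height _ _ _ assms])
      show "(if p then -1 else -3) \<le> brick_height p i j \<and> brick_height p i j \<le> (if p then -1 else -3) + 3"
        for i j unfolding brick_height_def by auto
      show "brick_height p (i + 2 * int N) j = brick_height p i j" for i j
        unfolding brick_height_def by simp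
      show "brick_height p i (j + int L) = brick_height p i j" for i j
        unfolding brick_height_def using even_L by simp
    qed fact
  qed
  then show ?thesis using height_related_bricks[OF assms] by blast
qed

section \<open>The two components\<close>

lemma bricks_in_tilings: "bricks p \<in> tilings N L"
  unfolding tilings_def using is_tiling_bricks by simp

lemma flip_components_eq_bricks:
  "flip_components N L = {flip_connected N L `` {bricks True}, flip_connected N L `` {bricks False}}"
proof -
  have "flip_connected N L `` {T} \<in> {flip_connected N L `` {bricks True}, flip_connected N L `` {bricks False}}"
    if T: "T \<in> tilings N L" for T
  proof -
    have "(T, bricks True) \<in> flip_connected N L \<or> (T, bricks False) \<in> flip_connected N L"
      using flip_connected_to_bricks T bricks_in_tilings unfolding flip_connected_eq tilings_def by simp
    then show ?thesis using equiv_class_eq[OF equiv_flip_connected] by blast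
  qed
  moreover have "flip_connected N L `` {bricks p} \<in> flip_components N L" for p
    unfolding flip_components_def using bricks_in_tilings by (rule quotientI)
  ultimately show ?thesis unfolding flip_components_def by (auto elim!: quotientE)
qed

lemma flip_components_bricks_neq:
  "flip_connected N L `` {bricks True} \<noteq> flip_connected N L `` {bricks False}"
proof
  assume "flip_connected N L `` {bricks True} = flip_connected N L `` {bricks False}"
  then have "(bricks True, bricks False) \<in> flip_connected N L"
    using equiv_class_eq_iff[OF equiv_flip_connected] bricks_in_tilings by simp
  then have "height_related (bricks True) (bricks False)"
    using height_related_if_flip_connected unfolding flip_connected_eq by simp
  then show False using not_height_related_bricks by simp
qed

lemma flip_iso_bricks:
  "flip_iso N L (flip_connected N L `` {bricks True}) (flip_connected N L `` {bricks False})"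
  unfolding flip_iso_def
proof (intro exI conjI ballI)
  let ?g = "tiling_image (column_shift 1)"
  have "?g ` (flip_connected N L `` {bricks True}) = flip_connected N L `` {bricks False}"
    using column_shift_component[OF bricks_in_tilings, of 1] column_shift_bricks[of 1 True] by simp
  then show "bij_betw ?g (flip_connected N L `` {bricks True}) (flip_connected N L `` {bricks False})"
    using inj_tiling_image_column_shift[of 1] by (intro bij_betw_imageI) (auto intro: inj_on_subset)
  fix T T'
  show "flip N L T T' \<longleftrightarrow> flip N L (?g T) (?g T')"
  proof
    assume "flip N L (?g T) (?g T')"
    from flip_column_shift[OF this, of "- 1"] show "flip N L T T'"
      by (simp only: tiling_image_column_shift_inverse)
  qed (rule flip_column_shift)
qed

theorem two_isomorphic_flip_components:
  "\<exists>C1 C2. C1 \<noteq> C2 \<and> flip_components N L = {C1, C2} \<and> flip_iso N L C1 C2"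
  using flip_components_bricks_neq flip_components_eq_bricks flip_iso_bricks by (intro exI conjI)

end

theorem corollary4p6:
  fixes n m :: nat
  assumes "n \<ge> 1" and "m \<ge> 2"
  shows "\<exists>C1 C2. C1 \<noteq> C2 \<and> flip_components (2*n+1) (2*m) = {C1, C2} \<and>
           flip_iso (2*n+1) (2*m) C1 C2"
proof -
  interpret odd_even_torus "2*n+1" "2*m"
    using assms by unfold_locales auto
  show ?thesis by (rule two_isomorphic_flip_components)
qed

end
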